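(* Let $n\ge 3$. The wheel $W_n$ (of order $n+1$) admits an $(a,d)$-distance antimagic labeling for some integers $a$ and $d\ge0$ if and only if $3\le n\le 5$.
   Context: The wheel $W_n$ ($n\ge3$) is obtained from a cycle $x_1x_2\cdots x_nx_1$ by adding a center vertex $x_0$ adjacent to all $x_1,\dots,x_n$. For a graph $G=(V,E)$ with $v=|V|$ and a bijection $f:V\to\{1,\dots,v\}$, the vertex-weight of $x$ is $w(x)=\sum_{y\in N(x)}f(y)$ with $N(x)$ the set of neighbours of $x$. For integers $a$ and $d\ge0$, $f$ is an $(a,d)$-distance antimagic labeling if the multiset of vertex-weights equals $\{a,a+d,\dots,a+(v-1)d\}$ (for $d=0$: all weights equal). *)

theory Defs
  imports Main "HOL-Library.Multiset"
begin

text \<open>A graph is given by a finite vertex set V and a symmetric adjacency relation adj.\<close>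

definition nbhd :: "'a set \<Rightarrow> ('a \<Rightarrow> 'a \<Rightarrow> bool) \<Rightarrow> 'a \<Rightarrow> 'a set" where
  "nbhd V adj x = {y \<in> V. adj x y}"

definition vertex_weight :: "'a set \<Rightarrow> ('a \<Rightarrow> 'a \<Rightarrow> bool) \<Rightarrow> ('a \<Rightarrow> nat) \<Rightarrow> 'a \<Rightarrow> nat" where
  "vertex_weight V adj f x = (\<Sum>y\<in>nbhd V adj x. f y)"

definition distance_antimagic ::
  "'a set \<Rightarrow> ('a \<Rightarrow> 'a \<Rightarrow> bool) \<Rightarrow> ('a \<Rightarrow> nat) \<Rightarrow> int \<Rightarrow> int \<Rightarrow> bool" where
  "distance_antimagic V adj f a d \<longleftrightarrow>
     bij_betw f V {1..card V} \<and>
     image_mset (\<lambda>x. int (vertex_weight V adj f x)) (mset_set V)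
       = mset (map (\<lambda>i. a + int i * d) [0..<card V])"

text \<open>Wheel W_n: vertices 0..n, centre 0, rim cycle 1-2-...-n-1.\<close>
definition wheel_vertices :: "nat \<Rightarrow> nat set" where
  "wheel_vertices n = {0..n}"

definition wheel_adj :: "nat \<Rightarrow> nat \<Rightarrow> nat \<Rightarrow> bool" where
  "wheel_adj n x y \<longleftrightarrow>
     (x = 0 \<and> y \<in> {1..n}) \<or> (y = 0 \<and> x \<in> {1..n}) \<or>
     (x \<in> {1..n} \<and> y \<in> {1..n} \<and> (y = x mod n + 1 \<or> x = y mod n + 1))"

end

theory Submission
  imports Defs
begin

text \<open>The labels are 1, ..., n+1. The centre sees every rim label, so its weight is at least
  n(n+1)/2, while a rim vertex sees three distinct labels, so its weight lies in [6, 3n]. For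
  n \<ge> 6 the centre thus strictly dominates and must carry the top term a + nd, leaving
  a, ..., a + (n-1)d on the rim. The gap between the centre and the largest rim weight forces
  d \<ge> 3, but then the rim weights spread over (n-1)d \<ge> 3n - 3 > 3n - 6, which is impossible.
  For n = 3, 4, 5 explicit labelings exist.\<close>

lemma sum_three_distinct_bounds:
  fixes x y z N :: nat
  assumes "distinct [x, y, z]" "x \<in> {1..N}" "y \<in> {1..N}" "z \<in> {1..N}"
  shows "6 \<le> x + y + z" "x + y + z \<le> 3 * N - 3"
  using assms by auto

lemma sum_bij_labels:
  assumes "bij_betw f V {1..card V}"
  shows "2 * sum f V = card V * (card V + 1)"
proof -
  have "sum f V = (\<Sum>i=1..card V. i)"
    using sum.reindex_bij_betw[OF assms, of "\<lambda>i. i"] by simp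
  then show ?thesis
    using double_gauss_sum_from_Suc_0[where 'a=nat, of "card V"] by simp
qed

lemma progression_top_at_dominant:
  fixes w :: "'a \<Rightarrow> int"
  assumes weights: "image_mset w (mset_set V) = mset (map (\<lambda>k. a + int k * d) [0..<Suc m])"
    and "0 \<le> d" "c \<in> V"
    and dominant: "\<And>x. x \<in> V \<Longrightarrow> x \<noteq> c \<Longrightarrow> w x < w c"
  shows "w c = a + int m * d"
    and "k < m \<Longrightarrow> \<exists>x\<in>V - {c}. w x = a + int k * d"
proof -
  have card: "card V = Suc m"
    using arg_cong[OF weights, of size] by simp
  then have "finite V"
    by (simp add: card_ge_0_finite)
  then have attained: "w ` V = (\<lambda>k. a + int k * d) ` {..m}"
    using arg_cong[OF weights, of set_mset] by (simp add: lessThan_Suc_atMost atLeast0LessThan del: upt_Suc)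
  obtain k0 where "k0 \<le> m" "w c = a + int k0 * d"
    using attained \<open>c \<in> V\<close> by force
  moreover obtain x where "x \<in> V" "w x = a + int m * d"
    using attained by (metis atMost_iff image_iff order_refl)
  moreover have "int k0 * d \<le> int m * d"
    using \<open>k0 \<le> m\<close> \<open>0 \<le> d\<close> by (simp add: mult_right_mono)
  ultimately show top: "w c = a + int m * d"
    using dominant by force
  assume "k < m"
  have "0 < d"
  proof (rule ccontr)
    assume "\<not> 0 < d"
    then have "d = 0" using \<open>0 \<le> d\<close> by simp
    have "card (V - {c}) = m"
      using card \<open>c \<in> V\<close> by simp
    then have "V - {c} \<noteq> {}"
      using \<open>k < m\<close> by (metis card.empty less_nat_zero_code)
    then obtain y where "y \<in> V" "y \<noteq> c" by blast
    then have "w y \<in> (\<lambda>k. a + int k * d) ` {..m}"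
      using attained by blast
    then show False
      using \<open>d = 0\<close> top dominant[OF \<open>y \<in> V\<close> \<open>y \<noteq> c\<close>] by auto
  qed
  obtain x where "x \<in> V" "w x = a + int k * d"
    using attained \<open>k < m\<close> by (metis atMost_iff image_iff less_imp_le)
  moreover have "w x < w c"
    using top \<open>0 < d\<close> \<open>k < m\<close> \<open>w x = a + int k * d\<close> by simp
  ultimately show "\<exists>x\<in>V - {c}. w x = a + int k * d"
    by auto
qed

definition wheel_prev :: "nat \<Rightarrow> nat \<Rightarrow> nat" where
  "wheel_prev n i = (if i = 1 then n else i - 1)"

definition wheel_next :: "nat \<Rightarrow> nat \<Rightarrow> nat" where
  "wheel_next n i = (if i = n then 1 else i + 1)"

lemma mod_eq_self_or_zero: "1 \<le> i \<Longrightarrow> i \<le> (n::nat) \<Longrightarrow> i mod n = (if i = n then 0 else i)"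
  by (auto simp: le_less)

lemma nbhd_wheel_center: "nbhd {0..n} (wheel_adj n) 0 = {1..n}"
  unfolding nbhd_def wheel_adj_def by auto

lemma nbhd_wheel_rim:
  assumes "3 \<le> n" "1 \<le> i" "i \<le> n"
  shows "nbhd {0..n} (wheel_adj n) i = {0, wheel_prev n i, wheel_next n i}"
  using assms unfolding nbhd_def wheel_adj_def wheel_prev_def wheel_next_def
  by (auto simp: mod_eq_self_or_zero split: if_splits)

lemma vertex_weight_wheel_center:
  "vertex_weight {0..n} (wheel_adj n) f 0 = (\<Sum>i=1..n. f i)"
  by (simp add: vertex_weight_def nbhd_wheel_center)

lemma wheel_prev_next_rim:
  assumes "3 \<le> n" "1 \<le> i" "i \<le> n"
  shows "wheel_prev n i \<in> {1..n}" "wheel_next n i \<in> {1..n}" "wheel_prev n i \<noteq> wheel_next n i"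
  using assms by (auto simp: wheel_prev_def wheel_next_def)

lemma vertex_weight_wheel_rim:
  assumes "3 \<le> n" "1 \<le> i" "i \<le> n"
  shows "vertex_weight {0..n} (wheel_adj n) f i = f 0 + f (wheel_prev n i) + f (wheel_next n i)"
  using wheel_prev_next_rim[OF assms] assms
  by (simp add: vertex_weight_def nbhd_wheel_rim)

lemma vertex_weight_wheel_center_lower:
  assumes "bij_betw f {0..n} {1..Suc n}"
  shows "n * (n + 1) \<le> 2 * vertex_weight {0..n} (wheel_adj n) f 0"
proof -
  have "2 * (f 0 + (\<Sum>i=1..n. f i)) = (n + 1) * (n + 2)"
    using sum_bij_labels[of f "{0..n}"] assms by (simp add: sum.atLeast_Suc_atMost)
  moreover have "f 0 \<le> n + 1"
    using assms by (auto simp: bij_betw_def)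
  ultimately show ?thesis
    by (simp add: vertex_weight_wheel_center algebra_simps)
qed

lemma vertex_weight_wheel_rim_bounds:
  assumes "bij_betw f {0..n} {1..Suc n}" "3 \<le> n" "1 \<le> i" "i \<le> n"
  shows "6 \<le> vertex_weight {0..n} (wheel_adj n) f i"
    and "vertex_weight {0..n} (wheel_adj n) f i \<le> 3 * n"
proof -
  note rim = wheel_prev_next_rim[OF assms(2-4)]
  have "inj_on f {0..n}" "f ` {0..n} = {1..Suc n}"
    using assms(1) by (auto simp: bij_betw_def)
  then have "distinct [f 0, f (wheel_prev n i), f (wheel_next n i)]"
      and "f 0 \<in> {1..n + 1}" "f (wheel_prev n i) \<in> {1..n + 1}" "f (wheel_next n i) \<in> {1..n + 1}"
    using rim by (auto simp: inj_on_eq_iff)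
  from sum_three_distinct_bounds[OF this] show
    "6 \<le> vertex_weight {0..n} (wheel_adj n) f i" "vertex_weight {0..n} (wheel_adj n) f i \<le> 3 * n"
    using vertex_weight_wheel_rim[OF assms(2-4)] by simp_all
qed

lemma wheel_not_distance_antimagic:
  assumes "6 \<le> n" "0 \<le> d"
  shows "\<not> distance_antimagic {0..n} (wheel_adj n) f a d"
proof
  assume "distance_antimagic {0..n} (wheel_adj n) f a d"
  define w where "w = (\<lambda>x. int (vertex_weight {0..n} (wheel_adj n) f x))"
  have bij: "bij_betw f {0..n} {1..Suc n}"
    and weights: "image_mset w (mset_set {0..n}) = mset (map (\<lambda>k. a + int k * d) [0..<Suc n])"
    using \<open>distance_antimagic {0..n} (wheel_adj n) f a d\<close>
    by (simp_all add: distance_antimagic_def w_def del: upt_Suc)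
  have rim: "6 \<le> w i" "w i \<le> 3 * int n" if "i \<in> {0..n} - {0}" for i
    using vertex_weight_wheel_rim_bounds[OF bij, of i] that assms by (auto simp: w_def)
  have "6 * n \<le> n * n"
    using assms by simp
  then have "3 * n + 3 \<le> vertex_weight {0..n} (wheel_adj n) f 0"
    using vertex_weight_wheel_center_lower[OF bij] assms unfolding distrib_left by linarith
  then have center: "3 * int n + 3 \<le> w 0"
    unfolding w_def by linarith
  have dominant: "w x < w 0" if "x \<in> {0..n}" "x \<noteq> 0" for x
    using rim[of x] center that by simp
  have top: "w 0 = a + int n * d"
    using progression_top_at_dominant(1)[OF weights \<open>0 \<le> d\<close>] dominant by simp
  have rim_terms: "\<exists>x\<in>{0..n} - {0}. w x = a + int k * d" if "k < n" for k
    using progression_top_at_dominant(2)[OF weights \<open>0 \<le> d\<close>] dominant that by simp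
  have "n - 1 < n" "0 < n"
    using assms by simp_all
  obtain x1 where "x1 \<in> {0..n} - {0}" "w x1 = a + int (n - 1) * d"
    using rim_terms[OF \<open>n - 1 < n\<close>] by blast
  have "\<exists>x\<in>{0..n} - {0}. w x = a"
    using rim_terms[OF \<open>0 < n\<close>] by simp
  then obtain x0 where "x0 \<in> {0..n} - {0}" "w x0 = a"
    by blast
  have "d = w 0 - w x1"
    using top \<open>w x1 = a + int (n - 1) * d\<close> assms by (simp add: of_nat_diff algebra_simps)
  then have "3 \<le> d"
    using center rim[OF \<open>x1 \<in> {0..n} - {0}\<close>] by linarith
  then have "3 * (int n - 1) \<le> d * (int n - 1)"
    using assms by (intro mult_right_mono) auto
  then show False
    using rim[OF \<open>x0 \<in> {0..n} - {0}\<close>] rim[OF \<open>x1 \<in> {0..n} - {0}\<close>]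
      \<open>w x0 = a\<close> \<open>w x1 = a + int (n - 1) * d\<close> assms
    by (simp add: of_nat_diff algebra_simps)
qed

lemma distance_antimagic_atLeastAtMost_iff:
  "distance_antimagic {0..n} adj f a d \<longleftrightarrow>
     bij_betw f {0..n} {1..Suc n} \<and>
     mset (map (\<lambda>x. int (vertex_weight {0..n} adj f x)) [0..<Suc n])
       = mset (map (\<lambda>k. a + int k * d) [0..<Suc n])"
proof -
  have "mset_set {0..n} = mset [0..<Suc n]"
    using mset_set_set[of "[0..<Suc n]"]
    by (simp add: atLeastLessThanSuc_atLeastAtMost del: upt_Suc)
  then show ?thesis
    by (simp add: distance_antimagic_def del: upt_Suc)
qed

lemma wheel3_distance_antimagic: "distance_antimagic {0..3} (wheel_adj 3) (\<lambda>i. i + 1) 6 1"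
proof -
  let ?w = "vertex_weight {0..3} (wheel_adj 3) (\<lambda>i::nat. i + 1)"
  have "?w 0 = 9"
    by (simp add: vertex_weight_wheel_center numeral_eq_Suc)
  moreover have "?w 1 = 8" "?w 2 = 7" "?w 3 = 6"
    by (subst vertex_weight_wheel_rim; simp add: wheel_prev_def wheel_next_def)+
  moreover have "bij_betw (\<lambda>i::nat. i + 1) {0..3} {1..Suc 3}"
    by (simp add: bij_betw_def inj_on_def image_Suc_atLeastAtMost)
  ultimately show ?thesis
    unfolding distance_antimagic_atLeastAtMost_iff by (simp add: numeral_eq_Suc)
qed

lemma wheel4_distance_antimagic:
  "distance_antimagic {0..4} (wheel_adj 4) (\<lambda>i. [5, 1, 2, 4, 3] ! i) 10 0"
proof -
  let ?w = "vertex_weight {0..4} (wheel_adj 4) (\<lambda>i. [5, 1, 2, 4, 3::nat] ! i)"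
  have "?w 0 = 10"
    by (simp add: vertex_weight_wheel_center numeral_eq_Suc)
  moreover have "?w 1 = 10" "?w 2 = 10" "?w 3 = 10" "?w 4 = 10"
    by (subst vertex_weight_wheel_rim; simp add: wheel_prev_def wheel_next_def)+
  moreover have "bij_betw (\<lambda>i. [5, 1, 2, 4, 3::nat] ! i) {0..4} {1..Suc 4}"
    by (simp add: bij_betw_def inj_on_def numeral_eq_Suc atLeastAtMostSuc_conv insert_commute)
  ultimately show ?thesis
    unfolding distance_antimagic_atLeastAtMost_iff by (simp add: numeral_eq_Suc)
qed

lemma wheel5_distance_antimagic:
  "distance_antimagic {0..5} (wheel_adj 5) (\<lambda>i. if i = 0 then 6 else i) 10 1"
proof -
  let ?w = "vertex_weight {0..5} (wheel_adj 5) (\<lambda>i::nat. if i = 0 then 6 else i)"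
  have "?w 0 = 15"
    by (simp add: vertex_weight_wheel_center numeral_eq_Suc)
  moreover have "?w 1 = 13" "?w 2 = 10" "?w 3 = 12" "?w 4 = 14" "?w 5 = 11"
    by (subst vertex_weight_wheel_rim; simp add: wheel_prev_def wheel_next_def)+
  moreover have "bij_betw (\<lambda>i::nat. if i = 0 then 6 else i) {0..5} {1..Suc 5}"
    by (simp add: bij_betw_def inj_on_def numeral_eq_Suc atLeastAtMostSuc_conv insert_commute)
  ultimately show ?thesis
    unfolding distance_antimagic_atLeastAtMost_iff by (simp add: numeral_eq_Suc add_mset_commute)
qed

theorem mainTheorem11:
  fixes n :: nat
  assumes "n \<ge> 3"
  shows "(\<exists>f a d. d \<ge> 0 \<and> distance_antimagic (wheel_vertices n) (wheel_adj n) f a d)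
         \<longleftrightarrow> n \<le> 5"
proof
  assume "\<exists>f a d. d \<ge> 0 \<and> distance_antimagic (wheel_vertices n) (wheel_adj n) f a d"
  then show "n \<le> 5"
    using wheel_not_distance_antimagic[of n] unfolding wheel_vertices_def by force
next
  assume "n \<le> 5"
  with assms consider "n = 3" | "n = 4" | "n = 5"
    by linarith
  then show "\<exists>f a d. d \<ge> 0 \<and> distance_antimagic (wheel_vertices n) (wheel_adj n) f a d"
    unfolding wheel_vertices_def
    using wheel3_distance_antimagic wheel4_distance_antimagic wheel5_distance_antimagic
    by cases (metis zero_le_one order_refl)+
qed

end
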